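(* Let $T$ be a causal theory with explainable symbols $\mathbf{p}$ all of whose rules are D-rules. Then $T^\dagger(\mathbf{u})$ is logically equivalent to $H(\mathbf{u},\widehat{\mathbf{u}})_{\Sigma 1}$.
   Context: A causal theory $T$ consists of a list $\mathbf{p}$ of distinct predicate constants (explainable symbols, not equality) and a finite set of causal rules $F\Leftarrow G$. A D-rule has the form $\bigvee_{A\in Pos}A\lor\bigvee_{A\in Neg}\neg A\Leftarrow G$, with $Pos,Neg$ finite sets of atomic formulas whose predicate symbols belong to $\mathbf{p}$ and $G$ a first-order formula without $\to$. For each $p\in\mathbf{p}$, $u_p$ and $\widehat u_p$ are predicate variables of the arity of $p$; $\mathbf{u}$, $\widehat{\mathbf{u}}$ are their lists; for $A=p(\mathbf{t})$, $u(A)=u_p(\mathbf{t})$ and $\widehat u(A)=\widehat u_p(\mathbf{t})$. $T^\dagger(\mathbf{u})$ is the conjunction over rules $F\Leftarrow G$ of $\forall\mathbf{x}(G\to F^{\mathbf{p}}_{\mathbf{u}})$, with $\mathbf{x}$ the free variables of $F,G$ and $F^{\mathbf{p}}_{\mathbf{u}}$ the result of replacing each $p$ by $u_p$. $H(\mathbf{u},\widehat{\mathbf{u}})$ is the conjunction over all rules of $T$ of $\forall\mathbf{x}\Big(G\to\bigvee_{A\in Pos}\big((\widehat u(A)\lor A)\to u(A)\big)\lor\bigvee_{A\in Neg}\big((u(A)\lor\neg A)\to\widehat u(A)\big)\Big)$, $\mathbf{x}$ the free object variables. For a formula $F$, $F_{\Sigma 1}$ is obtained by simultaneously substituting, for each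 $p\in\mathbf{p}$, $\lambda\mathbf{x}(u_p(\mathbf{x})\land p(\mathbf{x}))$ for $u_p$ and $\lambda\mathbf{x}(\neg u_p(\mathbf{x})\land\neg p(\mathbf{x}))$ for $\widehat u_p$. *)

theory Defs
  imports Main
begin

datatype 'f trm = Var nat | Fn 'f "'f trm list"

text \<open>Predicate variables: U p stands for u_p, UH p for the hatted u_p.\<close>
datatype 'c pvar = U 'c | UH 'c

datatype ('f, 'c) fm =
    FF | TT
  | Atom 'c "'f trm list"
  | PV "'c pvar" "'f trm list"
  | Eq "'f trm" "'f trm"
  | Neg "('f, 'c) fm"
  | Conj "('f, 'c) fm" "('f, 'c) fm"
  | Disj "('f, 'c) fm" "('f, 'c) fm"
  | Imp "('f, 'c) fm" "('f, 'c) fm"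
  | All nat "('f, 'c) fm"
  | Ex nat "('f, 'c) fm"

fun tval :: "('f \<Rightarrow> 'd list \<Rightarrow> 'd) \<Rightarrow> (nat \<Rightarrow> 'd) \<Rightarrow> 'f trm \<Rightarrow> 'd" where
  "tval I s (Var n) = s n"
| "tval I s (Fn f ts) = I f (map (tval I s) ts)"

fun fmval :: "('f \<Rightarrow> 'd list \<Rightarrow> 'd) \<Rightarrow> ('c \<Rightarrow> 'd list \<Rightarrow> bool) \<Rightarrow> ('c pvar \<Rightarrow> 'd list \<Rightarrow> bool)
     \<Rightarrow> (nat \<Rightarrow> 'd) \<Rightarrow> ('f, 'c) fm \<Rightarrow> bool" where
  "fmval I P V s FF = False"
| "fmval I P V s TT = True"
| "fmval I P V s (Atom c ts) = P c (map (tval I s) ts)"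
| "fmval I P V s (PV v ts) = V v (map (tval I s) ts)"
| "fmval I P V s (Eq t1 t2) = (tval I s t1 = tval I s t2)"
| "fmval I P V s (Neg \<phi>) = (\<not> fmval I P V s \<phi>)"
| "fmval I P V s (Conj \<phi> \<psi>) = (fmval I P V s \<phi> \<and> fmval I P V s \<psi>)"
| "fmval I P V s (Disj \<phi> \<psi>) = (fmval I P V s \<phi> \<or> fmval I P V s \<psi>)"
| "fmval I P V s (Imp \<phi> \<psi>) = (fmval I P V s \<phi> \<longrightarrow> fmval I P V s \<psi>)"
| "fmval I P V s (All n \<phi>) = (\<forall>d. fmval I P V (s(n := d)) \<phi>)"
| "fmval I P V s (Ex n \<phi>) = (\<exists>d. fmval I P V (s(n := d)) \<phi>)"

definition log_equiv :: "'d itself \<Rightarrow> ('f, 'c) fm \<Rightarrow> ('f, 'c) fm \<Rightarrow> bool" where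
  "log_equiv _ \<phi> \<psi> \<longleftrightarrow>
     (\<forall>(I :: 'f \<Rightarrow> 'd list \<Rightarrow> 'd) P V s. fmval I P V s \<phi> = fmval I P V s \<psi>)"

fun tvars :: "'f trm \<Rightarrow> nat set" where
  "tvars (Var n) = {n}"
| "tvars (Fn f ts) = \<Union> (set (map tvars ts))"

fun fv :: "('f, 'c) fm \<Rightarrow> nat set" where
  "fv FF = {}"
| "fv TT = {}"
| "fv (Atom c ts) = \<Union> (tvars ` set ts)"
| "fv (PV v ts) = \<Union> (tvars ` set ts)"
| "fv (Eq t1 t2) = tvars t1 \<union> tvars t2"
| "fv (Neg \<phi>) = fv \<phi>"
| "fv (Conj \<phi> \<psi>) = fv \<phi> \<union> fv \<psi>"
| "fv (Disj \<phi> \<psi>) = fv \<phi> \<union> fv \<psi>"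
| "fv (Imp \<phi> \<psi>) = fv \<phi> \<union> fv \<psi>"
| "fv (All n \<phi>) = fv \<phi> - {n}"
| "fv (Ex n \<phi>) = fv \<phi> - {n}"

definition close :: "('f, 'c) fm \<Rightarrow> ('f, 'c) fm" where
  "close \<phi> = foldr All (sorted_list_of_set (fv \<phi>)) \<phi>"

definition bigdisj :: "('f, 'c) fm list \<Rightarrow> ('f, 'c) fm" where
  "bigdisj xs = foldr Disj xs FF"

definition bigconj :: "('f, 'c) fm list \<Rightarrow> ('f, 'c) fm" where
  "bigconj xs = foldr Conj xs TT"

fun fo_noimp :: "('f, 'c) fm \<Rightarrow> bool" where
  "fo_noimp (PV v ts) = False"
| "fo_noimp (Imp \<phi> \<psi>) = False"
| "fo_noimp (Neg \<phi>) = fo_noimp \<phi>"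
| "fo_noimp (Conj \<phi> \<psi>) = (fo_noimp \<phi> \<and> fo_noimp \<psi>)"
| "fo_noimp (Disj \<phi> \<psi>) = (fo_noimp \<phi> \<and> fo_noimp \<psi>)"
| "fo_noimp (All n \<phi>) = fo_noimp \<phi>"
| "fo_noimp (Ex n \<phi>) = fo_noimp \<phi>"
| "fo_noimp _ = True"

text \<open>A causal rule F \<Leftarrow> G is the pair (F, G). A causal theory is a list ps of
  explainable predicate constants together with a (finite) list of rules.\<close>
type_synonym ('f, 'c) crule = "('f, 'c) fm \<times> ('f, 'c) fm"

fun ren :: "'c list \<Rightarrow> ('f, 'c) fm \<Rightarrow> ('f, 'c) fm" where
  "ren ps (Atom c ts) = (if c \<in> set ps then PV (U c) ts else Atom c ts)"
| "ren ps (Neg \<phi>) = Neg (ren ps \<phi>)"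
| "ren ps (Conj \<phi> \<psi>) = Conj (ren ps \<phi>) (ren ps \<psi>)"
| "ren ps (Disj \<phi> \<psi>) = Disj (ren ps \<phi>) (ren ps \<psi>)"
| "ren ps (Imp \<phi> \<psi>) = Imp (ren ps \<phi>) (ren ps \<psi>)"
| "ren ps (All n \<phi>) = All n (ren ps \<phi>)"
| "ren ps (Ex n \<phi>) = Ex n (ren ps \<phi>)"
| "ren ps \<phi> = \<phi>"

definition T_dagger :: "'c list \<Rightarrow> ('f, 'c) crule list \<Rightarrow> ('f, 'c) fm" where
  "T_dagger ps rules = bigconj (map (\<lambda>(F, G). close (Imp G (ren ps F))) rules)"

text \<open>An atomic formula A = p(t) is represented as the pair (p, t).
  A D-rule is given by (Pos, Neg, G) and stands for the rule
  (\<Or>A\<in>Pos. A) \<or> (\<Or>A\<in>Neg. \<not>A) \<Leftarrow> G.\<close>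
type_synonym ('f, 'c) atm = "'c \<times> 'f trm list"
type_synonym ('f, 'c) drule = "('f, 'c) atm list \<times> ('f, 'c) atm list \<times> ('f, 'c) fm"

definition dhead :: "('f, 'c) atm list \<Rightarrow> ('f, 'c) atm list \<Rightarrow> ('f, 'c) fm" where
  "dhead pos neg = bigdisj (map (\<lambda>(c, ts). Atom c ts) pos @ map (\<lambda>(c, ts). Neg (Atom c ts)) neg)"

definition drule_to_rule :: "('f, 'c) drule \<Rightarrow> ('f, 'c) crule" where
  "drule_to_rule r = (case r of (pos, neg, G) \<Rightarrow> (dhead pos neg, G))"

definition wf_Dtheory :: "'c list \<Rightarrow> ('f, 'c) drule list \<Rightarrow> bool" where
  "wf_Dtheory ps drs \<longleftrightarrow> distinct ps \<and>
     (\<forall>(pos, neg, G) \<in> set drs.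
        (\<forall>(c, ts) \<in> set pos \<union> set neg. c \<in> set ps) \<and> fo_noimp G)"

definition H :: "('f, 'c) drule list \<Rightarrow> ('f, 'c) fm" where
  "H drs = bigconj (map (\<lambda>(pos, neg, G). close (Imp G (bigdisj
      (map (\<lambda>(c, ts). Imp (Disj (PV (UH c) ts) (Atom c ts)) (PV (U c) ts)) pos @
       map (\<lambda>(c, ts). Imp (Disj (PV (U c) ts) (Neg (Atom c ts))) (PV (UH c) ts)) neg))))
     drs)"

text \<open>The substitution \<Sigma>1: u_p := \<lambda>x. u_p(x) \<and> p(x), hat u_p := \<lambda>x. \<not>u_p(x) \<and> \<not>p(x),
  for p in ps (simultaneous; no capture possible since the bodies only use x).\<close>
fun sigma1 :: "'c list \<Rightarrow> ('f, 'c) fm \<Rightarrow> ('f, 'c) fm" where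
  "sigma1 ps (PV (U c) ts) =
     (if c \<in> set ps then Conj (PV (U c) ts) (Atom c ts) else PV (U c) ts)"
| "sigma1 ps (PV (UH c) ts) =
     (if c \<in> set ps then Conj (Neg (PV (U c) ts)) (Neg (Atom c ts)) else PV (UH c) ts)"
| "sigma1 ps (Neg \<phi>) = Neg (sigma1 ps \<phi>)"
| "sigma1 ps (Conj \<phi> \<psi>) = Conj (sigma1 ps \<phi>) (sigma1 ps \<psi>)"
| "sigma1 ps (Disj \<phi> \<psi>) = Disj (sigma1 ps \<phi>) (sigma1 ps \<psi>)"
| "sigma1 ps (Imp \<phi> \<psi>) = Imp (sigma1 ps \<phi>) (sigma1 ps \<psi>)"
| "sigma1 ps (All n \<phi>) = All n (sigma1 ps \<phi>)"
| "sigma1 ps (Ex n \<phi>) = Ex n (sigma1 ps \<phi>)"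
| "sigma1 ps \<phi> = \<phi>"

end

theory Submission
  imports Defs
begin

text \<open>Under \<Sigma>1 the disjunct \<open>(\<hat>u(A) \<or> A) \<rightarrow> u(A)\<close> of H becomes
  \<open>((\<not>u(A) \<and> \<not>A) \<or> A) \<rightarrow> u(A) \<and> A\<close>, which is equivalent to \<open>u(A)\<close> by cases on \<open>A\<close>;
  dually \<open>(u(A) \<or> \<not>A) \<rightarrow> \<hat>u(A)\<close> becomes equivalent to \<open>\<not>u(A)\<close>. So \<open>H\<^sub>\<Sigma>\<^sub>1\<close> has,
  rule by rule, a head equivalent to the renamed head of the D-rule, while the bodies
  are untouched since they contain no predicate variables.\<close>

definition H_head :: "('f, 'c) atm list \<Rightarrow> ('f, 'c) atm list \<Rightarrow> ('f, 'c) fm" where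
  "H_head pos neg = bigdisj
      (map (\<lambda>(c, ts). Imp (Disj (PV (UH c) ts) (Atom c ts)) (PV (U c) ts)) pos @
       map (\<lambda>(c, ts). Imp (Disj (PV (U c) ts) (Neg (Atom c ts))) (PV (UH c) ts)) neg)"

lemma H_eq_bigconj_H_head:
  "H drs = bigconj (map (\<lambda>(pos, neg, G). close (Imp G (H_head pos neg))) drs)"
  by (simp add: H_def H_head_def)

lemma fmval_bigdisj: "fmval I P V s (bigdisj xs) \<longleftrightarrow> (\<exists>x\<in>set xs. fmval I P V s x)"
  by (induction xs) (auto simp: bigdisj_def)

lemma fmval_bigconj: "fmval I P V s (bigconj xs) \<longleftrightarrow> (\<forall>x\<in>set xs. fmval I P V s x)"
  by (induction xs) (auto simp: bigconj_def)

lemma fv_bigdisj: "fv (bigdisj xs) = \<Union> (fv ` set xs)"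
  by (induction xs) (auto simp: bigdisj_def)

lemma fv_ren: "fv (ren ps \<phi>) = fv \<phi>"
  by (induction ps \<phi> rule: ren.induct) auto

lemma fv_sigma1: "fv (sigma1 ps \<phi>) = fv \<phi>"
  by (induction ps \<phi> rule: sigma1.induct) auto

lemma ren_bigdisj: "ren ps (bigdisj xs) = bigdisj (map (ren ps) xs)"
  by (induction xs) (auto simp: bigdisj_def)

lemma sigma1_bigdisj: "sigma1 ps (bigdisj xs) = bigdisj (map (sigma1 ps) xs)"
  by (induction xs) (auto simp: bigdisj_def)

lemma sigma1_bigconj: "sigma1 ps (bigconj xs) = bigconj (map (sigma1 ps) xs)"
  by (induction xs) (auto simp: bigconj_def)

lemma sigma1_fo_noimp: "fo_noimp G \<Longrightarrow> sigma1 ps G = G"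
  by (induction G) auto

lemma sigma1_close: "sigma1 ps (close \<phi>) = close (sigma1 ps \<phi>)"
proof -
  have "sigma1 ps (foldr All xs \<phi>) = foldr All xs (sigma1 ps \<phi>)" for xs
    by (induction xs) auto
  then show ?thesis
    by (simp add: close_def fv_sigma1)
qed

lemma fmval_close_cong:
  assumes "fv \<phi> = fv \<psi>" and "\<And>s. fmval I P V s \<phi> \<longleftrightarrow> fmval I P V s \<psi>"
  shows "fmval I P V s (close \<phi>) \<longleftrightarrow> fmval I P V s (close \<psi>)"
proof -
  have "fmval I P V s (foldr All xs \<phi>) \<longleftrightarrow> fmval I P V s (foldr All xs \<psi>)" for xs s
    using assms(2) by (induction xs arbitrary: s) auto
  then show ?thesis
    by (simp add: close_def assms(1))
qed

lemma fmval_sigma1_pos_disjunct: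
  "c \<in> set ps \<Longrightarrow>
   fmval I P V s (sigma1 ps (Imp (Disj (PV (UH c) ts) (Atom c ts)) (PV (U c) ts)))
     \<longleftrightarrow> fmval I P V s (ren ps (Atom c ts))"
  by auto

lemma fmval_sigma1_neg_disjunct:
  "c \<in> set ps \<Longrightarrow>
   fmval I P V s (sigma1 ps (Imp (Disj (PV (U c) ts) (Neg (Atom c ts))) (PV (UH c) ts)))
     \<longleftrightarrow> fmval I P V s (ren ps (Neg (Atom c ts)))"
  by auto

lemma fmval_sigma1_H_head:
  assumes explainable: "\<forall>(c, ts) \<in> set pos \<union> set neg. c \<in> set ps"
  shows "fmval I P V s (sigma1 ps (H_head pos neg)) \<longleftrightarrow> fmval I P V s (ren ps (dhead pos neg))"
proof -
  have pos: "fmval I P V s (sigma1 ps ((\<lambda>(c, ts). Imp (Disj (PV (UH c) ts) (Atom c ts)) (PV (U c) ts)) a))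
      \<longleftrightarrow> fmval I P V s (ren ps ((\<lambda>(c, ts). Atom c ts) a))" if "a \<in> set pos" for a
    using explainable that fmval_sigma1_pos_disjunct by (cases a) fast
  have neg: "fmval I P V s (sigma1 ps ((\<lambda>(c, ts). Imp (Disj (PV (U c) ts) (Neg (Atom c ts))) (PV (UH c) ts)) a))
      \<longleftrightarrow> fmval I P V s (ren ps ((\<lambda>(c, ts). Neg (Atom c ts)) a))" if "a \<in> set neg" for a
    using explainable that fmval_sigma1_neg_disjunct by (cases a) fast
  show ?thesis
    unfolding H_head_def dhead_def sigma1_bigdisj ren_bigdisj fmval_bigdisj map_append set_append
      bex_Un set_map bex_simps(7)
    by (intro arg_cong2[where f = "(\<or>)"] bex_cong refl pos neg)
qed

lemma fv_sigma1_H_head: "fv (sigma1 ps (H_head pos neg)) = fv (ren ps (dhead pos neg))"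
  unfolding fv_sigma1 fv_ren H_head_def dhead_def fv_bigdisj by (auto split: prod.splits)

lemma fmval_sigma1_H_rule:
  assumes "\<forall>(c, ts) \<in> set pos \<union> set neg. c \<in> set ps" and "fo_noimp G"
  shows "fmval I P V s (sigma1 ps (close (Imp G (H_head pos neg))))
     \<longleftrightarrow> fmval I P V s (close (Imp G (ren ps (dhead pos neg))))"
  unfolding sigma1_close sigma1.simps(6) sigma1_fo_noimp[OF assms(2)]
proof (rule fmval_close_cong)
  show "fv (Imp G (sigma1 ps (H_head pos neg))) = fv (Imp G (ren ps (dhead pos neg)))"
    by (simp only: fv.simps fv_sigma1_H_head)
qed (simp add: fmval_sigma1_H_head[OF assms(1)] del: sigma1.simps ren.simps)

theorem lemma4:
  fixes ps :: "'c list" and drs :: "('f, 'c) drule list"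
  assumes "wf_Dtheory ps drs"
  shows "log_equiv TYPE('d)
           (T_dagger ps (map drule_to_rule drs))
           (sigma1 ps (H drs))"
  unfolding log_equiv_def
proof (intro allI)
  fix I :: "'f \<Rightarrow> 'd list \<Rightarrow> 'd" and P V s
  have "fmval I P V s ((\<lambda>(F, G). close (Imp G (ren ps F))) (drule_to_rule r))
      \<longleftrightarrow> fmval I P V s (sigma1 ps ((\<lambda>(pos, neg, G). close (Imp G (H_head pos neg))) r))"
    if "r \<in> set drs" for r
  proof -
    obtain pos neg G where r: "r = (pos, neg, G)"
      by (cases r) auto
    with assms that have "\<forall>(c, ts) \<in> set pos \<union> set neg. c \<in> set ps" and "fo_noimp G"
      unfolding wf_Dtheory_def by fastforce+
    then show ?thesis
      unfolding r drule_to_rule_def by (simp only: prod.case fmval_sigma1_H_rule)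
  qed
  then show "fmval I P V s (T_dagger ps (map drule_to_rule drs))
      \<longleftrightarrow> fmval I P V s (sigma1 ps (H drs))"
    unfolding T_dagger_def H_eq_bigconj_H_head sigma1_bigconj fmval_bigconj set_map ball_simps(9)
    by (rule ball_cong[OF refl])
qed

end
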